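(* Let $\mathcal{D}$ be a liability category, let $N=(G,X,\lambda,\iota;\delta,\hat\alpha)$ be a liability network in $\mathcal{D}$ with $G=(V,E,s,t)$, and let $\mathcal{L}$ be its liability sheaf on $\mathcal{H}_G$. Set $P=\prod_{v\in V}X_v$ and $B=\prod_{e\in E}X_{s(e)}^{\lambda_e}$, and define $D:P\to B$ and $A:B\to P$ componentwise by $D_e=\delta_e\circ\pi_{s(e)}$ (i.e. $D(\mathbf{x})_e=\delta_e(x_{s(e)})$) and $A_v=\alpha_v\circ\langle\pi_e\rangle_{t(e)=v}$ (i.e. $A(\mathbf{p})_v=\alpha_v((p_e)_{t(e)=v})$), and let $\Phi=A\circ D:P\to P$. Then there is a canonical isomorphism in $\mathcal{D}$ \[ \lim_{\mathcal{I}(\mathcal{H}_G)}\mathcal{L}\ \cong\ \mathrm{Eq}(\mathrm{id}_P,\Phi). \]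
   Context: A liability category is a category $\mathcal{D}$ such that: (1) $\mathcal{D}$ has a terminal object $1$, all finite products, and equalizers; (2) for each object $P$ the set $\mathrm{Hom}(1,P)$ carries a partial order, and for each $f:P\to Q$ the map $\rho\mapsto f\circ\rho$ is order-preserving; (3) for each $P$ a distinguished pullback-stable class $\mathcal{S}_P$ of monomorphisms into $P$ (constraint subobjects); (4) for each $P$ a bound selector $\beta_P:\mathrm{Hom}(1,P)\to\mathcal{S}_P$; (5) for finite families, $\mathrm{Hom}(1,\prod_iP_i)\to\prod_i\mathrm{Hom}(1,P_i)$ is an order isomorphism for the componentwise order. A liability network in $\mathcal{D}$ is $N=(G,X,\lambda,\iota;\delta,\hat\alpha)$ with $G=(V,E,s,t)$ a finite directed graph, payment objects $X_v$, liability morphisms $\lambda_e:1\to X_{s(e)}$, exogenous resources $\iota_v:1\to X_v$, distributors $\delta_e:X_{s(e)}\to X_{s(e)}^{\lambda_e}$ where $X_{s(e)}^{\lambda_e}$ is the domain of $\beta_{X_{s(e)}}(\lambda_e)$, and aggregators $\hat\alpha_v:X_v\times\prod_{t(e)=v}X_{s(e)}^{\lambda_e}\to X_v$; the partial aggregator is $\alpha_v=\hat\alpha_v\circ(\iota_v\times\mathrm{id}):\prod_{t(e)=v}X_{s(e)}^{\lambda_e}\to X_v$, empty products being $1$. The liability hypergraph $\mathcal{H}_G$ has vertices $V\sqcup\{e^*:e\in E\}$ and hyperedges $h_v^\delta$ (source $\{v\}$, target $\{e^*:s(e)=v\}$) and $h_v^\alpha$ (empty source, target $\{e^*:t(e)=v\}\cup\{v\}$).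 Its incidence category $\mathcal{I}(\mathcal{H}_G)$ has objects the vertices and hyperedges and exactly one non-identity morphism $h\to w$ for each incidence of vertex $w$ in the source or target of hyperedge $h$ (no other composites). The liability sheaf $\mathcal{L}:\mathcal{I}(\mathcal{H}_G)\to\mathcal{D}$ has $\mathcal{L}(v)=X_v$, $\mathcal{L}(e^* )=X_{s(e)}^{\lambda_e}$, $\mathcal{L}(h_v^\delta)=X_v$, $\mathcal{L}(h_v^\alpha)=\prod_{t(e)=v}X_{s(e)}^{\lambda_e}$, with $\mathcal{L}(h_v^\delta\to v)=\mathrm{id}$, $\mathcal{L}(h_v^\delta\to e^* )=\delta_e$, $\mathcal{L}(h_v^\alpha\to e^* )=\pi_e$, $\mathcal{L}(h_v^\alpha\to v)=\alpha_v$. $\mathrm{Eq}(f,g)$ denotes the equalizer of a parallel pair. *)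

theory Defs
  imports Main
begin

record ('o, 'a) cat =
  Ob   :: "'o set"
  Ar   :: "'a set"
  dom  :: "'a \<Rightarrow> 'o"
  cod  :: "'a \<Rightarrow> 'o"
  idt  :: "'o \<Rightarrow> 'a"
  comp :: "'a \<Rightarrow> 'a \<Rightarrow> 'a"   (* comp C g f = g o f *)

definition hom :: "('o,'a) cat \<Rightarrow> 'o \<Rightarrow> 'o \<Rightarrow> 'a set" where
  "hom C x y = {f \<in> Ar C. dom C f = x \<and> cod C f = y}"

definition category :: "('o,'a) cat \<Rightarrow> bool" where
  "category C \<longleftrightarrow>
     (\<forall>f\<in>Ar C. dom C f \<in> Ob C \<and> cod C f \<in> Ob C) \<and>
     (\<forall>x\<in>Ob C. idt C x \<in> hom C x x) \<and>
     (\<forall>x y z f g. f \<in> hom C x y \<longrightarrow> g \<in> hom C y z \<longrightarrow> comp C g f \<in> hom C x z) \<and>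
     (\<forall>w x y z f g h. f \<in> hom C w x \<longrightarrow> g \<in> hom C x y \<longrightarrow> h \<in> hom C y z \<longrightarrow>
        comp C h (comp C g f) = comp C (comp C h g) f) \<and>
     (\<forall>x y f. f \<in> hom C x y \<longrightarrow> comp C (idt C y) f = f \<and> comp C f (idt C x) = f)"

definition mono :: "('o,'a) cat \<Rightarrow> 'a \<Rightarrow> bool" where
  "mono C m \<longleftrightarrow> m \<in> Ar C \<and>
     (\<forall>y g h. g \<in> hom C y (dom C m) \<longrightarrow> h \<in> hom C y (dom C m) \<longrightarrow>
        comp C m g = comp C m h \<longrightarrow> g = h)"

definition iso :: "('o,'a) cat \<Rightarrow> 'a \<Rightarrow> bool" where
  "iso C f \<longleftrightarrow> f \<in> Ar C \<and> (\<exists>g \<in> hom C (cod C f) (dom C f).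
      comp C g f = idt C (dom C f) \<and> comp C f g = idt C (cod C f))"

definition is_terminal :: "('o,'a) cat \<Rightarrow> 'o \<Rightarrow> bool" where
  "is_terminal C T \<longleftrightarrow> T \<in> Ob C \<and> (\<forall>x\<in>Ob C. \<exists>!f. f \<in> hom C x T)"

definition is_product :: "('o,'a) cat \<Rightarrow> 'i set \<Rightarrow> ('i \<Rightarrow> 'o) \<Rightarrow> 'o \<Rightarrow> ('i \<Rightarrow> 'a) \<Rightarrow> bool" where
  "is_product C I X P pr \<longleftrightarrow> P \<in> Ob C \<and> (\<forall>i\<in>I. pr i \<in> hom C P (X i)) \<and>
     (\<forall>Y\<in>Ob C. \<forall>f. (\<forall>i\<in>I. f i \<in> hom C Y (X i)) \<longrightarrow>
        (\<exists>!u. u \<in> hom C Y P \<and> (\<forall>i\<in>I. comp C (pr i) u = f i)))"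

definition tuple :: "('o,'a) cat \<Rightarrow> 'i set \<Rightarrow> 'o \<Rightarrow> ('i \<Rightarrow> 'a) \<Rightarrow> 'o \<Rightarrow> ('i \<Rightarrow> 'a) \<Rightarrow> 'a" where
  "tuple C I P pr Y f = (THE u. u \<in> hom C Y P \<and> (\<forall>i\<in>I. comp C (pr i) u = f i))"

definition is_equalizer :: "('o,'a) cat \<Rightarrow> 'a \<Rightarrow> 'a \<Rightarrow> 'o \<Rightarrow> 'a \<Rightarrow> bool" where
  "is_equalizer C f g Q q \<longleftrightarrow>
     f \<in> Ar C \<and> g \<in> Ar C \<and> dom C f = dom C g \<and> cod C f = cod C g \<and>
     q \<in> hom C Q (dom C f) \<and> comp C f q = comp C g q \<and>
     (\<forall>Y z. z \<in> hom C Y (dom C f) \<longrightarrow> comp C f z = comp C g z \<longrightarrow>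
        (\<exists>!u. u \<in> hom C Y Q \<and> comp C q u = z))"

definition is_pullback :: "('o,'a) cat \<Rightarrow> 'a \<Rightarrow> 'a \<Rightarrow> 'a \<Rightarrow> 'a \<Rightarrow> bool" where
  "is_pullback C f m m' f' \<longleftrightarrow>
     f \<in> Ar C \<and> m \<in> Ar C \<and> cod C f = cod C m \<and>
     m' \<in> hom C (dom C m') (dom C f) \<and> f' \<in> hom C (dom C m') (dom C m) \<and>
     comp C f m' = comp C m f' \<and>
     (\<forall>Y a b. a \<in> hom C Y (dom C f) \<longrightarrow> b \<in> hom C Y (dom C m) \<longrightarrow>
        comp C f a = comp C m b \<longrightarrow>
        (\<exists>!u. u \<in> hom C Y (dom C m') \<and> comp C m' u = a \<and> comp C f' u = b))"

text \<open>one: terminal object; le P: partial order on Hom(1,P); S P: constraint subobjects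
  (monomorphisms into P); bsel P: the bound selector beta_P.  Finite products are
  expressed as products of families indexed by {..<n} (every finite family is, up
  to reindexing, of this form).\<close>
definition liability_category ::
  "('o,'a) cat \<Rightarrow> 'o \<Rightarrow> ('o \<Rightarrow> 'a \<Rightarrow> 'a \<Rightarrow> bool) \<Rightarrow> ('o \<Rightarrow> 'a set) \<Rightarrow> ('o \<Rightarrow> 'a \<Rightarrow> 'a) \<Rightarrow> bool"
where
  "liability_category C one le S bsel \<longleftrightarrow>
     category C \<and>
     \<comment> \<open>(1) terminal object, finite products, equalizers\<close>
     is_terminal C one \<and>
     (\<forall>(n::nat) X. (\<forall>i<n. X i \<in> Ob C) \<longrightarrow> (\<exists>P pr. is_product C {..<n} X P pr)) \<and>
     (\<forall>f g. f \<in> Ar C \<longrightarrow> g \<in> Ar C \<longrightarrow> dom C f = dom C g \<longrightarrow> cod C f = cod C g \<longrightarrow>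
        (\<exists>Q q. is_equalizer C f g Q q)) \<and>
     \<comment> \<open>(2) partial orders on global elements, preserved by postcomposition\<close>
     (\<forall>P\<in>Ob C.
        (\<forall>x\<in>hom C one P. le P x x) \<and>
        (\<forall>x\<in>hom C one P. \<forall>y\<in>hom C one P. le P x y \<longrightarrow> le P y x \<longrightarrow> x = y) \<and>
        (\<forall>x\<in>hom C one P. \<forall>y\<in>hom C one P. \<forall>z\<in>hom C one P.
            le P x y \<longrightarrow> le P y z \<longrightarrow> le P x z)) \<and>
     (\<forall>P Q f x y. f \<in> hom C P Q \<longrightarrow> x \<in> hom C one P \<longrightarrow> y \<in> hom C one P \<longrightarrow>
        le P x y \<longrightarrow> le Q (comp C f x) (comp C f y)) \<and>
     \<comment> \<open>(3) pullback-stable classes of monomorphisms\<close>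
     (\<forall>P\<in>Ob C. \<forall>m\<in>S P. mono C m \<and> cod C m = P) \<and>
     (\<forall>P Q f m m' f'. m \<in> S P \<longrightarrow> f \<in> hom C Q P \<longrightarrow> is_pullback C f m m' f' \<longrightarrow> m' \<in> S Q) \<and>
     \<comment> \<open>(4) bound selectors\<close>
     (\<forall>P\<in>Ob C. \<forall>x\<in>hom C one P. bsel P x \<in> S P) \<and>
     \<comment> \<open>(5) global elements of finite products carry the componentwise order\<close>
     (\<forall>(n::nat) X P pr. is_product C {..<n} X P pr \<longrightarrow>
        (\<forall>x\<in>hom C one P. \<forall>y\<in>hom C one P.
           le P x y \<longleftrightarrow> (\<forall>i<n. le (X i) (comp C (pr i) x) (comp C (pr i) y))))"

text \<open>X^{lambda_e}: domain of the bound selected by lambda_e.\<close>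
definition Xlam :: "('o,'a) cat \<Rightarrow> ('o \<Rightarrow> 'a \<Rightarrow> 'a) \<Rightarrow> ('e \<Rightarrow> 'v) \<Rightarrow> ('v \<Rightarrow> 'o) \<Rightarrow> ('e \<Rightarrow> 'a) \<Rightarrow> 'e \<Rightarrow> 'o"
  where "Xlam C bsel s X lam e = dom C (bsel (X (s e)) (lam e))"

text \<open>Binary product X_v x Pin_v encoded as a product indexed by bool
  (True: X_v, False: Pin_v).\<close>
definition bin :: "'o \<Rightarrow> 'o \<Rightarrow> bool \<Rightarrow> 'o" where
  "bin a b = (\<lambda>i. if i then a else b)"

text \<open>Partial aggregator alpha_v = hat alpha_v o (iota_v x id), where the domain
  1 x Pin_v is identified with Pin_v: alpha_v = hat alpha_v o <iota_v o !, id>.\<close>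
definition partial_agg ::
  "('o,'a) cat \<Rightarrow> 'o \<Rightarrow> 'o \<Rightarrow> 'o \<Rightarrow> 'o \<Rightarrow> (bool \<Rightarrow> 'a) \<Rightarrow> 'a \<Rightarrow> 'a \<Rightarrow> 'a" where
  "partial_agg C one Xv Pv XP prXP iota ahat =
     comp C ahat (tuple C UNIV XP prXP Pv
        (\<lambda>i. if i then comp C iota (THE u. u \<in> hom C Pv one) else idt C Pv))"

definition net_alpha ::
  "('o,'a) cat \<Rightarrow> 'o \<Rightarrow> ('v \<Rightarrow> 'o) \<Rightarrow> ('v \<Rightarrow> 'o) \<Rightarrow> ('v \<Rightarrow> 'o) \<Rightarrow> ('v \<Rightarrow> bool \<Rightarrow> 'a) \<Rightarrow>
   ('v \<Rightarrow> 'a) \<Rightarrow> ('v \<Rightarrow> 'a) \<Rightarrow> 'v \<Rightarrow> 'a" where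
  "net_alpha C one X Pin XP prXP iota ahat v =
     partial_agg C one (X v) (Pin v) (XP v) (prXP v) (iota v) (ahat v)"

definition liability_network ::
  "('o,'a) cat \<Rightarrow> 'o \<Rightarrow> ('o \<Rightarrow> 'a set) \<Rightarrow> ('o \<Rightarrow> 'a \<Rightarrow> 'a) \<Rightarrow>
   'v set \<Rightarrow> 'e set \<Rightarrow> ('e \<Rightarrow> 'v) \<Rightarrow> ('e \<Rightarrow> 'v) \<Rightarrow>
   ('v \<Rightarrow> 'o) \<Rightarrow> ('e \<Rightarrow> 'a) \<Rightarrow> ('v \<Rightarrow> 'a) \<Rightarrow> ('e \<Rightarrow> 'a) \<Rightarrow>
   ('v \<Rightarrow> 'o) \<Rightarrow> ('v \<Rightarrow> 'e \<Rightarrow> 'a) \<Rightarrow> ('v \<Rightarrow> 'o) \<Rightarrow> ('v \<Rightarrow> bool \<Rightarrow> 'a) \<Rightarrow> ('v \<Rightarrow> 'a) \<Rightarrow> bool"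
where
  "liability_network C one S bsel V E s t X lam iota delta Pin prIn XP prXP ahat \<longleftrightarrow>
     finite V \<and> finite E \<and> (\<forall>e\<in>E. s e \<in> V \<and> t e \<in> V) \<and>
     (\<forall>v\<in>V. X v \<in> Ob C) \<and>
     (\<forall>e\<in>E. lam e \<in> hom C one (X (s e))) \<and>
     (\<forall>v\<in>V. iota v \<in> hom C one (X v)) \<and>
     (\<forall>e\<in>E. delta e \<in> hom C (X (s e)) (Xlam C bsel s X lam e)) \<and>
     \<comment> \<open>Pin v = prod_{t(e)=v} X^{lambda_e} (the terminal object if empty)\<close>
     (\<forall>v\<in>V. is_product C {e\<in>E. t e = v} (Xlam C bsel s X lam) (Pin v) (prIn v)) \<and>
     \<comment> \<open>XP v = X_v x Pin v\<close>
     (\<forall>v\<in>V. is_product C UNIV (bin (X v) (Pin v)) (XP v) (prXP v)) \<and>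
     (\<forall>v\<in>V. ahat v \<in> hom C (XP v) (X v))"

text \<open>Objects of the incidence category of the liability hypergraph.\<close>
datatype ('v, 'e) inode = Vx 'v | Es 'e | Hd 'v | Ha 'v

definition inodes :: "'v set \<Rightarrow> 'e set \<Rightarrow> ('v,'e) inode set" where
  "inodes V E = Vx ` V \<union> Es ` E \<union> Hd ` V \<union> Ha ` V"

text \<open>Non-identity morphisms h -> w of the incidence category (one per incidence).\<close>
definition incid :: "'v set \<Rightarrow> 'e set \<Rightarrow> ('e \<Rightarrow> 'v) \<Rightarrow> ('e \<Rightarrow> 'v) \<Rightarrow>
    (('v,'e) inode \<times> ('v,'e) inode) set" where
  "incid V E s t =
     {(Hd v, Vx v) | v. v \<in> V} \<union>
     {(Hd (s e), Es e) | e. e \<in> E} \<union>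
     {(Ha (t e), Es e) | e. e \<in> E} \<union>
     {(Ha v, Vx v) | v. v \<in> V}"

fun sheaf_ob :: "('e \<Rightarrow> 'o) \<Rightarrow> ('v \<Rightarrow> 'o) \<Rightarrow> ('v \<Rightarrow> 'o) \<Rightarrow> ('v,'e) inode \<Rightarrow> 'o" where
  "sheaf_ob XL X Pin (Vx v) = X v"
| "sheaf_ob XL X Pin (Es e) = XL e"
| "sheaf_ob XL X Pin (Hd v) = X v"
| "sheaf_ob XL X Pin (Ha v) = Pin v"

fun sheaf_mor :: "('o,'a) cat \<Rightarrow> ('v \<Rightarrow> 'o) \<Rightarrow> ('e \<Rightarrow> 'a) \<Rightarrow> ('v \<Rightarrow> 'e \<Rightarrow> 'a) \<Rightarrow> ('v \<Rightarrow> 'a) \<Rightarrow>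
    ('v,'e) inode \<Rightarrow> ('v,'e) inode \<Rightarrow> 'a" where
  "sheaf_mor C X delta prIn alpha (Hd v) (Vx w) = idt C (X v)"
| "sheaf_mor C X delta prIn alpha (Hd v) (Es e) = delta e"
| "sheaf_mor C X delta prIn alpha (Ha v) (Es e) = prIn v e"
| "sheaf_mor C X delta prIn alpha (Ha v) (Vx w) = alpha v"
| "sheaf_mor C X delta prIn alpha _ _ = undefined"

text \<open>Cones and limits of a diagram F over a category whose non-identity morphisms
  are given by the set Mor of pairs (h,w) (no nontrivial composites), with object
  part Fo and morphism part Fm.\<close>
definition is_cone :: "('o,'a) cat \<Rightarrow> 'n set \<Rightarrow> ('n \<times> 'n) set \<Rightarrow> ('n \<Rightarrow> 'o) \<Rightarrow>
    ('n \<Rightarrow> 'n \<Rightarrow> 'a) \<Rightarrow> 'o \<Rightarrow> ('n \<Rightarrow> 'a) \<Rightarrow> bool" where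
  "is_cone C Nd Mor Fo Fm L c \<longleftrightarrow> L \<in> Ob C \<and>
     (\<forall>x\<in>Nd. c x \<in> hom C L (Fo x)) \<and>
     (\<forall>(h,w)\<in>Mor. comp C (Fm h w) (c h) = c w)"

definition is_limit :: "('o,'a) cat \<Rightarrow> 'n set \<Rightarrow> ('n \<times> 'n) set \<Rightarrow> ('n \<Rightarrow> 'o) \<Rightarrow>
    ('n \<Rightarrow> 'n \<Rightarrow> 'a) \<Rightarrow> 'o \<Rightarrow> ('n \<Rightarrow> 'a) \<Rightarrow> bool" where
  "is_limit C Nd Mor Fo Fm L c \<longleftrightarrow> is_cone C Nd Mor Fo Fm L c \<and>
     (\<forall>L' c'. is_cone C Nd Mor Fo Fm L' c' \<longrightarrow>
        (\<exists>!u. u \<in> hom C L' L \<and> (\<forall>x\<in>Nd. comp C (c x) u = c' x)))"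

end

(*
  Cones over the liability sheaf with vertex Y correspond, naturally in Y, to maps
  z : Y -> P fixed by Phi = A o D.  The cone of z has the legs pi_v o z at v and h_v^delta,
  pi_e o D o z at e*, and <pi_e>_{t(e)=v} o D o z at h_v^alpha.  These legs commute with
  every map of the sheaf except alpha_v : h_v^alpha -> v, where
  alpha_v o <pi_e>_{t(e)=v} o D = pi_v o Phi, so commutation there is exactly the condition
  Phi z = z.  Conversely a cone is determined by its components at the vertices v, that is
  by the map z it induces into P.  Hence the equalizer of id_P and Phi and the limit of the
  sheaf represent the same functor, and they are isomorphic.
*)

theory Submission
  imports Defs
begin

context
  fixes C :: "('o,'a) cat"
  assumes cat: "category C"
begin

lemma comp_in_hom: "f \<in> hom C x y \<Longrightarrow> g \<in> hom C y z \<Longrightarrow> comp C g f \<in> hom C x z"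
  using cat unfolding category_def by blast

lemma comp_assoc:
  "f \<in> hom C w x \<Longrightarrow> g \<in> hom C x y \<Longrightarrow> h \<in> hom C y z \<Longrightarrow>
   comp C h (comp C g f) = comp C (comp C h g) f"
  using cat unfolding category_def by blast

lemma comp_id_left: "f \<in> hom C x y \<Longrightarrow> comp C (idt C y) f = f"
  using cat unfolding category_def by blast

lemma comp_id_right: "f \<in> hom C x y \<Longrightarrow> comp C f (idt C x) = f"
  using cat unfolding category_def by blast

lemma id_in_hom: "x \<in> Ob C \<Longrightarrow> idt C x \<in> hom C x x"
  using cat unfolding category_def by blast

lemma hom_Ob: "f \<in> hom C x y \<Longrightarrow> x \<in> Ob C \<and> y \<in> Ob C"
  using cat unfolding category_def hom_def by auto

end

lemma dom_in_hom: "f \<in> hom C x y \<Longrightarrow> dom C f = x"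
  unfolding hom_def by simp

lemma iso_if_inverse:
  assumes "f \<in> hom C x y" "g \<in> hom C y x"
    and "comp C g f = idt C x" "comp C f g = idt C y"
  shows "iso C f"
  using assms unfolding iso_def hom_def by auto

lemma pr_in_hom: "is_product C I F P pr \<Longrightarrow> i \<in> I \<Longrightarrow> pr i \<in> hom C P (F i)"
  unfolding is_product_def by blast

lemma product_Ob: "is_product C I F P pr \<Longrightarrow> P \<in> Ob C"
  unfolding is_product_def by blast

lemma product_universal:
  "is_product C I F P pr \<Longrightarrow> Y \<in> Ob C \<Longrightarrow> \<forall>i\<in>I. f i \<in> hom C Y (F i) \<Longrightarrow>
   \<exists>!u. u \<in> hom C Y P \<and> (\<forall>i\<in>I. comp C (pr i) u = f i)"
  unfolding is_product_def by blast

lemma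
  assumes "is_product C I F P pr" "Y \<in> Ob C" "\<forall>i\<in>I. f i \<in> hom C Y (F i)"
  shows tuple_in_hom: "tuple C I P pr Y f \<in> hom C Y P"
    and comp_pr_tuple: "i \<in> I \<Longrightarrow> comp C (pr i) (tuple C I P pr Y f) = f i"
proof -
  have "tuple C I P pr Y f \<in> hom C Y P \<and> (\<forall>i\<in>I. comp C (pr i) (tuple C I P pr Y f) = f i)"
    unfolding tuple_def by (rule theI'[OF product_universal[OF assms]])
  then show "tuple C I P pr Y f \<in> hom C Y P" and "i \<in> I \<Longrightarrow> comp C (pr i) (tuple C I P pr Y f) = f i"
    by auto
qed

lemma tuple_unique:
  assumes cat: "category C" and prod: "is_product C I F P pr"
    and u: "u \<in> hom C Y P" and pr_u: "\<forall>i\<in>I. comp C (pr i) u = f i"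
  shows "tuple C I P pr Y f = u"
proof -
  have Y: "Y \<in> Ob C" using hom_Ob[OF cat u] by blast
  have f: "\<forall>i\<in>I. f i \<in> hom C Y (F i)"
    using pr_u comp_in_hom[OF cat u pr_in_hom[OF prod]] by auto
  show ?thesis
    unfolding tuple_def by (rule the1_equality[OF product_universal[OF prod Y f]]) (use u pr_u in blast)
qed

lemma product_ext:
  assumes cat: "category C" and prod: "is_product C I F P pr"
    and u: "u \<in> hom C Y P" and u': "u' \<in> hom C Y P"
    and pr_eq: "\<forall>i\<in>I. comp C (pr i) u = comp C (pr i) u'"
  shows "u = u'"
proof -
  have "tuple C I P pr Y (\<lambda>i. comp C (pr i) u) = u"
    by (rule tuple_unique[OF cat prod u]) simp
  moreover have "tuple C I P pr Y (\<lambda>i. comp C (pr i) u) = u'"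
    by (rule tuple_unique[OF cat prod u']) (use pr_eq in simp)
  ultimately show ?thesis by simp
qed

lemma equalizer_in_hom: "is_equalizer C f g Q q \<Longrightarrow> q \<in> hom C Q (dom C f)"
  unfolding is_equalizer_def by blast

lemma equalizer_equalizes: "is_equalizer C f g Q q \<Longrightarrow> comp C f q = comp C g q"
  unfolding is_equalizer_def by blast

lemma equalizer_id_in_hom:
  "category C \<Longrightarrow> P \<in> Ob C \<Longrightarrow> is_equalizer C (idt C P) f Q q \<Longrightarrow> q \<in> hom C Q P"
  using equalizer_in_hom dom_in_hom[OF id_in_hom] by metis

lemma equalizer_factor:
  "is_equalizer C f g Q q \<Longrightarrow> z \<in> hom C Y (dom C f) \<Longrightarrow> comp C f z = comp C g z \<Longrightarrow>
   \<exists>u\<in>hom C Y Q. comp C q u = z"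
  unfolding is_equalizer_def by blast

lemma equalizer_cancel:
  assumes cat: "category C" and eq: "is_equalizer C f g Q q"
    and u: "u \<in> hom C Y Q" and u': "u' \<in> hom C Y Q" and qu: "comp C q u = comp C q u'"
  shows "u = u'"
proof -
  have q: "q \<in> hom C Q (dom C f)" using equalizer_in_hom[OF eq] .
  have f: "f \<in> hom C (dom C f) (cod C f)" and g: "g \<in> hom C (dom C f) (cod C f)"
    using eq unfolding is_equalizer_def hom_def by auto
  have "comp C f (comp C q u) = comp C g (comp C q u)"
    using comp_assoc[OF cat u q f] comp_assoc[OF cat u q g] equalizer_equalizes[OF eq] by simp
  then have "\<exists>!w. w \<in> hom C Y Q \<and> comp C q w = comp C q u"
    using eq comp_in_hom[OF cat u q] unfolding is_equalizer_def by blast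
  then show ?thesis using u u' qu by (metis (no_types, lifting))
qed

lemma cone_Ob: "is_cone C Nd Mor Fo Fm L c \<Longrightarrow> L \<in> Ob C"
  and cone_in_hom: "is_cone C Nd Mor Fo Fm L c \<Longrightarrow> x \<in> Nd \<Longrightarrow> c x \<in> hom C L (Fo x)"
  and cone_commutes: "is_cone C Nd Mor Fo Fm L c \<Longrightarrow> (h, w) \<in> Mor \<Longrightarrow> comp C (Fm h w) (c h) = c w"
  unfolding is_cone_def by auto

lemma limit_unique_iso:
  assumes cat: "category C"
    and lim: "is_limit C Nd Mor Fo Fm L c" and lim': "is_limit C Nd Mor Fo Fm L' c'"
  shows "\<exists>\<phi>\<in>hom C L L'. iso C \<phi> \<and> (\<forall>x\<in>Nd. comp C (c' x) \<phi> = c x)"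
proof -
  have cone: "is_cone C Nd Mor Fo Fm L c" and cone': "is_cone C Nd Mor Fo Fm L' c'"
    using lim lim' unfolding is_limit_def by blast+
  obtain \<phi> where \<phi>: "\<phi> \<in> hom C L L'" and c'\<phi>: "\<forall>x\<in>Nd. comp C (c' x) \<phi> = c x"
    using lim' cone unfolding is_limit_def by blast
  obtain \<psi> where \<psi>: "\<psi> \<in> hom C L' L" and c\<psi>: "\<forall>x\<in>Nd. comp C (c x) \<psi> = c' x"
    using lim cone' unfolding is_limit_def by blast
  have endo_id: "u = idt C M"
    if lim_M: "is_limit C Nd Mor Fo Fm M d" and u: "u \<in> hom C M M"
      and du: "\<forall>x\<in>Nd. comp C (d x) u = d x" for M d u
  proof -
    have cone_M: "is_cone C Nd Mor Fo Fm M d" using lim_M unfolding is_limit_def by blast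
    then have "\<exists>!w. w \<in> hom C M M \<and> (\<forall>x\<in>Nd. comp C (d x) w = d x)"
      using lim_M unfolding is_limit_def by blast
    moreover have "\<forall>x\<in>Nd. comp C (d x) (idt C M) = d x"
      using comp_id_right[OF cat cone_in_hom[OF cone_M]] by blast
    ultimately show ?thesis using u du id_in_hom[OF cat cone_Ob[OF cone_M]] by (metis (no_types, lifting))
  qed
  have "comp C \<psi> \<phi> = idt C L"
  proof (rule endo_id[OF lim comp_in_hom[OF cat \<phi> \<psi>]], rule ballI)
    fix x assume x: "x \<in> Nd"
    then show "comp C (c x) (comp C \<psi> \<phi>) = c x"
      using comp_assoc[OF cat \<phi> \<psi> cone_in_hom[OF cone x]] c\<psi> c'\<phi> by simp
  qed
  moreover have "comp C \<phi> \<psi> = idt C L'"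
  proof (rule endo_id[OF lim' comp_in_hom[OF cat \<psi> \<phi>]], rule ballI)
    fix x assume x: "x \<in> Nd"
    then show "comp C (c' x) (comp C \<phi> \<psi>) = c' x"
      using comp_assoc[OF cat \<psi> \<phi> cone_in_hom[OF cone' x]] c\<psi> c'\<phi> by simp
  qed
  ultimately have "iso C \<phi>" by (rule iso_if_inverse[OF \<phi> \<psi>])
  with \<phi> c'\<phi> show ?thesis by blast
qed

lemma equalizer_is_limit:
  assumes cat: "category C" and Phi: "Phi \<in> hom C P P"
    and eq: "is_equalizer C (idt C P) Phi Q q"
    and leg: "\<And>x. x \<in> Nd \<Longrightarrow> leg x \<in> hom C P (Fo x)"
    and cone_of_fixed: "\<And>Y z. z \<in> hom C Y P \<Longrightarrow> comp C Phi z = z \<Longrightarrow>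
      is_cone C Nd Mor Fo Fm Y (\<lambda>x. comp C (leg x) z)"
    and fixed_of_cone: "\<And>Y c. is_cone C Nd Mor Fo Fm Y c \<Longrightarrow>
      \<exists>z\<in>hom C Y P. comp C Phi z = z \<and> (\<forall>x\<in>Nd. comp C (leg x) z = c x)"
    and legs_mono: "\<And>Y z z'. z \<in> hom C Y P \<Longrightarrow> z' \<in> hom C Y P \<Longrightarrow>
      \<forall>x\<in>Nd. comp C (leg x) z = comp C (leg x) z' \<Longrightarrow> z = z'"
  shows "is_limit C Nd Mor Fo Fm Q (\<lambda>x. comp C (leg x) q)"
proof -
  have P: "P \<in> Ob C" using hom_Ob[OF cat Phi] by blast
  have dom_id: "dom C (idt C P) = P" using dom_in_hom[OF id_in_hom[OF cat P]] .
  have q: "q \<in> hom C Q P" using equalizer_id_in_hom[OF cat P eq] .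
  have q_fixed: "comp C Phi q = q"
    using equalizer_equalizes[OF eq] comp_id_left[OF cat q] by simp
  have legs_comp: "comp C (comp C (leg x) q) u = comp C (leg x) (comp C q u)"
    if "x \<in> Nd" "u \<in> hom C Y Q" for x u Y
    using comp_assoc[OF cat that(2) q leg[OF that(1)]] by simp
  have "\<exists>!u. u \<in> hom C L Q \<and> (\<forall>x\<in>Nd. comp C (comp C (leg x) q) u = c x)"
    if cone: "is_cone C Nd Mor Fo Fm L c" for L c
  proof -
    obtain z where z: "z \<in> hom C L P" and z_fixed: "comp C Phi z = z"
      and legs_z: "\<forall>x\<in>Nd. comp C (leg x) z = c x"
      using fixed_of_cone[OF cone] by blast
    obtain u where u: "u \<in> hom C L Q" and qu: "comp C q u = z"
      using equalizer_factor[OF eq] z z_fixed comp_id_left[OF cat z] dom_id by force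
    show ?thesis
    proof (rule ex1I[of _ u])
      show "u \<in> hom C L Q \<and> (\<forall>x\<in>Nd. comp C (comp C (leg x) q) u = c x)"
        using u qu legs_z legs_comp by simp
    next
      fix u' assume u': "u' \<in> hom C L Q \<and> (\<forall>x\<in>Nd. comp C (comp C (leg x) q) u' = c x)"
      have "comp C q u' = z"
        by (rule legs_mono[OF comp_in_hom[OF cat _ q] z]) (use u' legs_z legs_comp in auto)
      then show "u' = u" using equalizer_cancel[OF cat eq] u u' qu by blast
    qed
  qed
  then show ?thesis unfolding is_limit_def using cone_of_fixed[OF q q_fixed] by blast
qed

lemma inodes_cases:
  assumes "x \<in> inodes V E"
  obtains (Vx) v where "v \<in> V" "x = Vx v"
    | (Es) e where "e \<in> E" "x = Es e"
    | (Hd) v where "v \<in> V" "x = Hd v"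
    | (Ha) v where "v \<in> V" "x = Ha v"
  using assms unfolding inodes_def by blast

lemma inodes_iff [simp]:
  "Vx v \<in> inodes V E \<longleftrightarrow> v \<in> V" "Es e \<in> inodes V E \<longleftrightarrow> e \<in> E"
  "Hd v \<in> inodes V E \<longleftrightarrow> v \<in> V" "Ha v \<in> inodes V E \<longleftrightarrow> v \<in> V"
  unfolding inodes_def by auto

lemma incid_cases:
  assumes "p \<in> incid V E s t"
  obtains (Hd_Vx) v where "v \<in> V" "p = (Hd v, Vx v)"
    | (Hd_Es) e where "e \<in> E" "p = (Hd (s e), Es e)"
    | (Ha_Es) e where "e \<in> E" "p = (Ha (t e), Es e)"
    | (Ha_Vx) v where "v \<in> V" "p = (Ha v, Vx v)"
  using assms unfolding incid_def by blast

lemma incid_intros: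
  "v \<in> V \<Longrightarrow> (Hd v, Vx v) \<in> incid V E s t"
  "e \<in> E \<Longrightarrow> (Hd (s e), Es e) \<in> incid V E s t"
  "e \<in> E \<Longrightarrow> (Ha (t e), Es e) \<in> incid V E s t"
  "v \<in> V \<Longrightarrow> (Ha v, Vx v) \<in> incid V E s t"
  unfolding incid_def by blast+

lemma liability_category_category: "liability_category C one le S bsel \<Longrightarrow> category C"
  and liability_category_terminal: "liability_category C one le S bsel \<Longrightarrow> is_terminal C one"
  unfolding liability_category_def by blast+

lemma liability_category_equalizer:
  assumes "liability_category C one le S bsel" "f \<in> hom C x y" "g \<in> hom C x y"
  shows "\<exists>Q q. is_equalizer C f g Q q"
proof -
  have "\<forall>f g. f \<in> Ar C \<longrightarrow> g \<in> Ar C \<longrightarrow> dom C f = dom C g \<longrightarrow> cod C f = cod C g \<longrightarrow>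
      (\<exists>Q q. is_equalizer C f g Q q)"
    using assms(1) unfolding liability_category_def by (elim conjE) assumption
  then show ?thesis using assms(2,3) unfolding hom_def by auto
qed

locale liability_network_in_category =
  fixes C :: "('o,'a) cat" and one :: 'o
    and S :: "'o \<Rightarrow> 'a set" and bsel :: "'o \<Rightarrow> 'a \<Rightarrow> 'a"
    and V :: "'v set" and E :: "'e set" and s t :: "'e \<Rightarrow> 'v"
    and X :: "'v \<Rightarrow> 'o" and lam :: "'e \<Rightarrow> 'a" and iota :: "'v \<Rightarrow> 'a" and delta :: "'e \<Rightarrow> 'a"
    and Pin :: "'v \<Rightarrow> 'o" and prIn :: "'v \<Rightarrow> 'e \<Rightarrow> 'a"
    and XP :: "'v \<Rightarrow> 'o" and prXP :: "'v \<Rightarrow> bool \<Rightarrow> 'a" and ahat :: "'v \<Rightarrow> 'a"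
    and P :: 'o and prP :: "'v \<Rightarrow> 'a" and B :: 'o and prB :: "'e \<Rightarrow> 'a"
  assumes cat: "category C" and terminal: "is_terminal C one"
    and network: "liability_network C one S bsel V E s t X lam iota delta Pin prIn XP prXP ahat"
    and P_product: "is_product C V X P prP"
    and B_product: "is_product C E (Xlam C bsel s X lam) B prB"
begin

abbreviation "XL \<equiv> Xlam C bsel s X lam"
abbreviation "alpha \<equiv> net_alpha C one X Pin XP prXP iota ahat"
abbreviation "incoming v \<equiv> tuple C {e\<in>E. t e = v} (Pin v) (prIn v) B prB"
abbreviation "D \<equiv> tuple C E B prB P (\<lambda>e. comp C (delta e) (prP (s e)))"
abbreviation "A \<equiv> tuple C V P prP B (\<lambda>v. comp C (alpha v) (incoming v))"
abbreviation "Phi \<equiv> comp C A D"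
abbreviation "nodes \<equiv> inodes V E"
abbreviation "incidences \<equiv> incid V E s t"
abbreviation "Lo \<equiv> sheaf_ob XL X Pin"
abbreviation "Lm \<equiv> sheaf_mor C X delta prIn alpha"

lemma source_in_V: "e \<in> E \<Longrightarrow> s e \<in> V"
  and target_in_V: "e \<in> E \<Longrightarrow> t e \<in> V"
  and X_Ob: "v \<in> V \<Longrightarrow> X v \<in> Ob C"
  and iota_in_hom: "v \<in> V \<Longrightarrow> iota v \<in> hom C one (X v)"
  and delta_in_hom: "e \<in> E \<Longrightarrow> delta e \<in> hom C (X (s e)) (XL e)"
  and Pin_product: "v \<in> V \<Longrightarrow> is_product C {e\<in>E. t e = v} XL (Pin v) (prIn v)"
  and XP_product: "v \<in> V \<Longrightarrow> is_product C UNIV (bin (X v) (Pin v)) (XP v) (prXP v)"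
  and ahat_in_hom: "v \<in> V \<Longrightarrow> ahat v \<in> hom C (XP v) (X v)"
  using network unfolding liability_network_def by blast+

lemma to_terminal: "Y \<in> Ob C \<Longrightarrow> (THE u. u \<in> hom C Y one) \<in> hom C Y one"
  using terminal unfolding is_terminal_def by (metis theI')

lemma alpha_in_hom:
  assumes v: "v \<in> V"
  shows "alpha v \<in> hom C (Pin v) (X v)"
proof -
  have Pin: "Pin v \<in> Ob C" using product_Ob[OF Pin_product[OF v]] .
  let ?f = "\<lambda>i. if i then comp C (iota v) (THE u. u \<in> hom C (Pin v) one) else idt C (Pin v)"
  have "\<forall>i\<in>UNIV. ?f i \<in> hom C (Pin v) (bin (X v) (Pin v) i)"
    using comp_in_hom[OF cat to_terminal[OF Pin] iota_in_hom[OF v]] id_in_hom[OF cat Pin]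
    by (simp add: bin_def)
  from tuple_in_hom[OF XP_product[OF v] Pin this]
  show ?thesis
    unfolding net_alpha_def partial_agg_def by (rule comp_in_hom[OF cat _ ahat_in_hom[OF v]])
qed

lemma P_Ob: "P \<in> Ob C" and B_Ob: "B \<in> Ob C"
  using product_Ob[OF P_product] product_Ob[OF B_product] .

lemma D_in_hom: "D \<in> hom C P B"
  and pr_D: "e \<in> E \<Longrightarrow> comp C (prB e) D = comp C (delta e) (prP (s e))"
proof -
  have "\<forall>e\<in>E. comp C (delta e) (prP (s e)) \<in> hom C P (XL e)"
    using comp_in_hom[OF cat pr_in_hom[OF P_product source_in_V] delta_in_hom] by blast
  from tuple_in_hom[OF B_product P_Ob this] comp_pr_tuple[OF B_product P_Ob this]
  show "D \<in> hom C P B" and "e \<in> E \<Longrightarrow> comp C (prB e) D = comp C (delta e) (prP (s e))"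
    by auto
qed

lemma incoming_in_hom: "v \<in> V \<Longrightarrow> incoming v \<in> hom C B (Pin v)"
  and prIn_incoming: "e \<in> E \<Longrightarrow> comp C (prIn (t e) e) (incoming (t e)) = prB e"
proof -
  have pr: "\<forall>e\<in>{e\<in>E. t e = v}. prB e \<in> hom C B (XL e)" for v
    using pr_in_hom[OF B_product] by simp
  show "v \<in> V \<Longrightarrow> incoming v \<in> hom C B (Pin v)"
    using tuple_in_hom[OF Pin_product B_Ob pr] .
  show "e \<in> E \<Longrightarrow> comp C (prIn (t e) e) (incoming (t e)) = prB e"
    using comp_pr_tuple[OF Pin_product[OF target_in_V] B_Ob pr] by simp
qed

lemma A_in_hom: "A \<in> hom C B P"
  and pr_A: "v \<in> V \<Longrightarrow> comp C (prP v) A = comp C (alpha v) (incoming v)"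
proof -
  have "\<forall>v\<in>V. comp C (alpha v) (incoming v) \<in> hom C B (X v)"
    using comp_in_hom[OF cat incoming_in_hom alpha_in_hom] by blast
  from tuple_in_hom[OF P_product B_Ob this] comp_pr_tuple[OF P_product B_Ob this]
  show "A \<in> hom C B P" and "v \<in> V \<Longrightarrow> comp C (prP v) A = comp C (alpha v) (incoming v)"
    by auto
qed

lemma Phi_in_hom: "Phi \<in> hom C P P"
  using comp_in_hom[OF cat D_in_hom A_in_hom] .

lemma pr_Phi:
  assumes v: "v \<in> V"
  shows "comp C (prP v) Phi = comp C (alpha v) (comp C (incoming v) D)"
  using comp_assoc[OF cat D_in_hom A_in_hom pr_in_hom[OF P_product v]]
    comp_assoc[OF cat D_in_hom incoming_in_hom[OF v] alpha_in_hom[OF v]] pr_A[OF v]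
  by simp

definition leg :: "('v,'e) inode \<Rightarrow> 'a" where
  "leg x = (case x of Vx v \<Rightarrow> prP v | Hd v \<Rightarrow> prP v
     | Es e \<Rightarrow> comp C (prB e) D | Ha v \<Rightarrow> comp C (incoming v) D)"

lemma leg_in_hom: "x \<in> nodes \<Longrightarrow> leg x \<in> hom C P (Lo x)"
  by (erule inodes_cases)
    (auto simp: leg_def intro: pr_in_hom[OF P_product] comp_in_hom[OF cat D_in_hom]
      pr_in_hom[OF B_product] incoming_in_hom)

lemma sheaf_mor_in_hom: "(h, w) \<in> incidences \<Longrightarrow> Lm h w \<in> hom C (Lo h) (Lo w)"
  by (erule incid_cases)
    (auto simp: id_in_hom[OF cat X_Ob] delta_in_hom alpha_in_hom
      intro: pr_in_hom[OF Pin_product[OF target_in_V]])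

lemma leg_incidence:
  shows "v \<in> V \<Longrightarrow> comp C (Lm (Hd v) (Vx v)) (leg (Hd v)) = leg (Vx v)"
    and "e \<in> E \<Longrightarrow> comp C (Lm (Hd (s e)) (Es e)) (leg (Hd (s e))) = leg (Es e)"
    and "e \<in> E \<Longrightarrow> comp C (Lm (Ha (t e)) (Es e)) (leg (Ha (t e))) = leg (Es e)"
    and "v \<in> V \<Longrightarrow> comp C (Lm (Ha v) (Vx v)) (leg (Ha v)) = comp C (leg (Vx v)) Phi"
  using comp_id_left[OF cat pr_in_hom[OF P_product]] pr_D
    comp_assoc[OF cat D_in_hom incoming_in_hom[OF target_in_V]
      pr_in_hom[OF Pin_product[OF target_in_V]]] prIn_incoming pr_Phi
  by (auto simp: leg_def)

lemma cone_of_fixed_point: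
  assumes z: "z \<in> hom C Y P" and z_fixed: "comp C Phi z = z"
  shows "is_cone C nodes incidences Lo Lm Y (\<lambda>x. comp C (leg x) z)"
  unfolding is_cone_def
proof (intro conjI ballI)
  show "Y \<in> Ob C" using hom_Ob[OF cat z] by blast
  show "comp C (leg x) z \<in> hom C Y (Lo x)" if "x \<in> nodes" for x
    using comp_in_hom[OF cat z leg_in_hom[OF that]] .
  fix p assume p: "p \<in> incidences"
  obtain h w where hw: "p = (h, w)" by (cases p)
  have h: "h \<in> nodes" using p unfolding hw by (cases rule: incid_cases) (auto simp: source_in_V target_in_V)
  have "comp C (Lm h w) (comp C (leg h) z) = comp C (comp C (Lm h w) (leg h)) z"
    using comp_assoc[OF cat z leg_in_hom[OF h] sheaf_mor_in_hom] p hw by blast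
  also have "\<dots> = comp C (leg w) z"
    using p unfolding hw
  proof (cases rule: incid_cases)
    case (Ha_Vx v)
    then show ?thesis
      using leg_incidence(4) comp_assoc[OF cat z Phi_in_hom leg_in_hom, of "Vx v"] z_fixed by simp
  qed (use leg_incidence in auto)
  finally show "case p of (h, w) \<Rightarrow> comp C (Lm h w) (comp C (leg h) z) = comp C (leg w) z"
    unfolding hw by simp
qed

lemma legs_jointly_mono:
  assumes "z \<in> hom C Y P" "z' \<in> hom C Y P" "\<forall>x\<in>nodes. comp C (leg x) z = comp C (leg x) z'"
  shows "z = z'"
proof (rule product_ext[OF cat P_product assms(1,2)], rule ballI)
  fix v assume "v \<in> V"
  then show "comp C (prP v) z = comp C (prP v) z'"
    using bspec[OF assms(3), of "Vx v"] by (simp add: leg_def)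
qed

lemma cone_legs_factor:
  assumes cone: "is_cone C nodes incidences Lo Lm Y c" and z: "z \<in> hom C Y P"
    and pr_z: "\<And>v. v \<in> V \<Longrightarrow> comp C (prP v) z = c (Vx v)"
  shows "\<forall>x\<in>nodes. comp C (leg x) z = c x"
proof -
  note c = cone_in_hom[OF cone] and commutes = cone_commutes[OF cone]
  have Dz: "comp C D z \<in> hom C Y B" using comp_in_hom[OF cat z D_in_hom] .
  have Hd: "c (Hd v) = c (Vx v)" if v: "v \<in> V" for v
    using commutes[OF incid_intros(1)[OF v]] comp_id_left[OF cat c[of "Hd v"]] v by simp
  have Es: "comp C (leg (Es e)) z = c (Es e)" if e: "e \<in> E" for e
  proof -
    have "comp C (leg (Es e)) z = comp C (comp C (delta e) (prP (s e))) z"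
      using pr_D[OF e] by (simp add: leg_def)
    also have "\<dots> = comp C (delta e) (c (Hd (s e)))"
      using comp_assoc[OF cat z pr_in_hom[OF P_product source_in_V[OF e]] delta_in_hom[OF e]]
        pr_z Hd source_in_V[OF e] by simp
    also have "\<dots> = c (Es e)" using commutes[OF incid_intros(2)[OF e]] by simp
    finally show ?thesis .
  qed
  have Ha: "comp C (leg (Ha v)) z = c (Ha v)" if v: "v \<in> V" for v
  proof (rule product_ext[OF cat Pin_product[OF v]], rule_tac [3] ballI)
    have "comp C (leg (Ha v)) z = comp C (incoming v) (comp C D z)"
      using comp_assoc[OF cat z D_in_hom incoming_in_hom[OF v]] by (simp add: leg_def)
    then show leg_z: "comp C (leg (Ha v)) z \<in> hom C Y (Pin v)"
      using comp_in_hom[OF cat Dz incoming_in_hom[OF v]] by simp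
    show "c (Ha v) \<in> hom C Y (Pin v)" using c[of "Ha v"] v by simp
    fix e assume "e \<in> {e \<in> E. t e = v}"
    then have e: "e \<in> E" and v_eq: "v = t e" by auto
    have "comp C (prIn v e) (comp C (leg (Ha v)) z) = comp C (prB e) (comp C D z)"
      using comp_assoc[OF cat Dz incoming_in_hom[OF v] pr_in_hom[OF Pin_product[OF v]]]
        comp_assoc[OF cat z D_in_hom incoming_in_hom[OF v]] prIn_incoming[OF e] e v_eq
      by (simp add: leg_def)
    also have "\<dots> = c (Es e)"
      using comp_assoc[OF cat z D_in_hom pr_in_hom[OF B_product e]] Es[OF e] by (simp add: leg_def)
    also have "\<dots> = comp C (prIn v e) (c (Ha v))"
      using commutes[OF incid_intros(3)[OF e]] v_eq by simp
    finally show "comp C (prIn v e) (comp C (leg (Ha v)) z) = comp C (prIn v e) (c (Ha v))" .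
  qed
  show ?thesis
  proof
    fix x assume "x \<in> nodes"
    then show "comp C (leg x) z = c x"
      by (cases rule: inodes_cases) (simp_all add: Es Ha, simp_all add: leg_def pr_z Hd)
  qed
qed

lemma fixed_point_of_cone:
  assumes cone: "is_cone C nodes incidences Lo Lm Y c"
  shows "\<exists>z\<in>hom C Y P. comp C Phi z = z \<and> (\<forall>x\<in>nodes. comp C (leg x) z = c x)"
proof -
  have Y: "Y \<in> Ob C" using cone_Ob[OF cone] .
  have c: "\<forall>v\<in>V. c (Vx v) \<in> hom C Y (X v)" using cone_in_hom[OF cone, of "Vx _"] by simp
  define z where "z = tuple C V P prP Y (\<lambda>v. c (Vx v))"
  have z: "z \<in> hom C Y P" and pr_z: "\<And>v. v \<in> V \<Longrightarrow> comp C (prP v) z = c (Vx v)"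
    unfolding z_def using tuple_in_hom[OF P_product Y c] comp_pr_tuple[OF P_product Y c] by auto
  have legs_z: "\<forall>x\<in>nodes. comp C (leg x) z = c x"
    using cone_legs_factor[OF cone z pr_z] .
  have "comp C Phi z = z"
  proof (rule product_ext[OF cat P_product comp_in_hom[OF cat z Phi_in_hom] z], rule ballI)
    fix v assume v: "v \<in> V"
    have "comp C (prP v) (comp C Phi z) = comp C (comp C (Lm (Ha v) (Vx v)) (leg (Ha v))) z"
      using comp_assoc[OF cat z Phi_in_hom pr_in_hom[OF P_product v]] leg_incidence(4)[OF v]
      by (simp add: leg_def)
    also have "\<dots> = comp C (Lm (Ha v) (Vx v)) (c (Ha v))"
      using comp_assoc[OF cat z leg_in_hom sheaf_mor_in_hom[OF incid_intros(4)[OF v]]] legs_z v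
      by simp
    also have "\<dots> = comp C (prP v) z"
      using cone_commutes[OF cone incid_intros(4)[OF v]] pr_z[OF v] by simp
    finally show "comp C (prP v) (comp C Phi z) = comp C (prP v) z" .
  qed
  with z legs_z show ?thesis by blast
qed

lemma equalizer_is_sheaf_limit:
  "is_equalizer C (idt C P) Phi Q q \<Longrightarrow> is_limit C nodes incidences Lo Lm Q (\<lambda>x. comp C (leg x) q)"
  by (rule equalizer_is_limit[OF cat Phi_in_hom _ leg_in_hom cone_of_fixed_point
        fixed_point_of_cone legs_jointly_mono])

lemma limit_iso_fixed_point_equalizer:
  assumes lim: "is_limit C nodes incidences Lo Lm L c" and eq: "is_equalizer C (idt C P) Phi Q q"
  shows "\<exists>\<phi>. \<phi> \<in> hom C L Q \<and> iso C \<phi> \<and> comp C q \<phi> = tuple C V P prP L (\<lambda>v. c (Vx v))"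
proof -
  have q: "q \<in> hom C Q P" using equalizer_id_in_hom[OF cat P_Ob eq] .
  obtain \<phi> where \<phi>: "\<phi> \<in> hom C L Q" "iso C \<phi>"
    and legs_\<phi>: "\<forall>x\<in>nodes. comp C (comp C (leg x) q) \<phi> = c x"
    using limit_unique_iso[OF cat lim equalizer_is_sheaf_limit[OF eq]] by blast
  have "tuple C V P prP L (\<lambda>v. c (Vx v)) = comp C q \<phi>"
  proof (rule tuple_unique[OF cat P_product comp_in_hom[OF cat \<phi>(1) q]], rule ballI)
    fix v assume "v \<in> V"
    then show "comp C (prP v) (comp C q \<phi>) = c (Vx v)"
      using comp_assoc[OF cat \<phi>(1) q pr_in_hom[OF P_product]] bspec[OF legs_\<phi>, of "Vx v"]
      by (simp add: leg_def)
  qed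
  with \<phi> show ?thesis by auto
qed

end

theorem mainTheorem2:
  fixes C :: "('o,'a) cat" and one :: 'o
    and le :: "'o \<Rightarrow> 'a \<Rightarrow> 'a \<Rightarrow> bool" and S :: "'o \<Rightarrow> 'a set" and bsel :: "'o \<Rightarrow> 'a \<Rightarrow> 'a"
    and V :: "'v set" and E :: "'e set" and s t :: "'e \<Rightarrow> 'v"
    and X :: "'v \<Rightarrow> 'o" and lam :: "'e \<Rightarrow> 'a" and iota :: "'v \<Rightarrow> 'a" and delta :: "'e \<Rightarrow> 'a"
    and Pin :: "'v \<Rightarrow> 'o" and prIn :: "'v \<Rightarrow> 'e \<Rightarrow> 'a"
    and XP :: "'v \<Rightarrow> 'o" and prXP :: "'v \<Rightarrow> bool \<Rightarrow> 'a" and ahat :: "'v \<Rightarrow> 'a"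
    and P :: 'o and prP :: "'v \<Rightarrow> 'a" and B :: 'o and prB :: "'e \<Rightarrow> 'a"
  assumes LC: "liability_category C one le S bsel"
    and LN: "liability_network C one S bsel V E s t X lam iota delta Pin prIn XP prXP ahat"
    and HP: "is_product C V X P prP"
    and HB: "is_product C E (Xlam C bsel s X lam) B prB"
  defines "D \<equiv> tuple C E B prB P (\<lambda>e. comp C (delta e) (prP (s e)))"
    and "A \<equiv> tuple C V P prP B
               (\<lambda>v. comp C (net_alpha C one X Pin XP prXP iota ahat v) (tuple C {e\<in>E. t e = v} (Pin v) (prIn v) B prB))"
    and "Nd \<equiv> inodes V E"
    and "Mor \<equiv> incid V E s t"
    and "Fo \<equiv> sheaf_ob (Xlam C bsel s X lam) X Pin"
    and "Fm \<equiv> sheaf_mor C X delta prIn (net_alpha C one X Pin XP prXP iota ahat)"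
  shows "(\<exists>L c. is_limit C Nd Mor Fo Fm L c) \<and>
         (\<forall>L c Q q. is_limit C Nd Mor Fo Fm L c \<longrightarrow> is_equalizer C (idt C P) (comp C A D) Q q \<longrightarrow>
            (\<exists>\<phi>. \<phi> \<in> hom C L Q \<and> iso C \<phi> \<and>
                 comp C q \<phi> = tuple C V P prP L (\<lambda>v. c (Vx v))))"
proof -
  have cat: "category C" using liability_category_category[OF LC] .
  interpret liability_network_in_category C one S bsel V E s t X lam iota delta Pin prIn XP prXP ahat
      P prP B prB
    using cat liability_category_terminal[OF LC] LN HP HB by unfold_locales
  obtain Q q where "is_equalizer C (idt C P) Phi Q q"
    using liability_category_equalizer[OF LC id_in_hom[OF cat P_Ob] Phi_in_hom] by blast
  then have "\<exists>L c. is_limit C nodes incidences Lo Lm L c"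
    using equalizer_is_sheaf_limit by blast
  with limit_iso_fixed_point_equalizer show ?thesis
    unfolding D_def A_def Nd_def Mor_def Fo_def Fm_def by blast
qed

end
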